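(* Let $n\ge 2$ and let $f$ be the function on $\mathbb{F}_{2^n}$ defined by $f(0)=1$, $f(1)=0$ and $f(x)=x^{-1}$ for $x\notin\{0,1\}$. For $a,b\in\mathbb{F}_{2^n}$ let $\nabla_f(a,b)$ be the number of $x\in\mathbb{F}_{2^n}$ with $f(x+a+b)+f(x+a)+f(x+b)+f(x)=0$, and for $i\in\{0,4,8\}$ let $\omega_i$ be the number of pairs $(a,b)\in\mathbb{F}_{2^n}\times\mathbb{F}_{2^n}$ with $ab(a+b)\neq 0$ and $\nabla_f(a,b)=i$. Then $\omega_8=6$ if $3\mid n$ and $\omega_8=0$ if $3\nmid n$; \[ \omega_4=\begin{cases}2^{n+1}-14,& 2\mid n,\ 3\mid n,\\ 2^{n+1}-2,& 2\mid n,\ 3\nmid n,\\ 2^{n+1}-16,& 2\nmid n,\ 3\mid n,\\ 2^{n+1}-4,& 2\nmid n,\ 3\nmid n;\end{cases} \qquad \omega_0=\begin{cases}2^{2n}-5\cdot2^n+10,& 2\mid n,\ 3\mid n,\\ 2^{2n}-5\cdot2^n+4,& 2\mid n,\ 3\nmid n,\\ 2^{2n}-5\cdot2^n+12,& 2\nmid n,\ 3\mid n,\\ 2^{2n}-5\cdot2^n+6,& 2\nmid n,\ 3\nmid n.\end{cases} \]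
   Context: This is the second-order zero differential spectrum of $Inv\circ(0,1)$, where $Inv(x)=x^{2^n-2}$ and $(0,1)$ is the transposition swapping $0$ and $1$. Pairs with $ab(a+b)=0$ (for which $\nabla_f(a,b)=2^n$) are not counted in the $\omega_i$. *)

theory Defs
  imports Main
begin

definition inv_swap01 :: "'a::field \<Rightarrow> 'a" where
  "inv_swap01 x = (if x = 0 then 1 else if x = 1 then 0 else inverse x)"

definition nabla :: "('a::{finite,comm_ring_1} \<Rightarrow> 'a) \<Rightarrow> 'a \<Rightarrow> 'a \<Rightarrow> nat" where
  "nabla f a b = card {x. f (x + a + b) + f (x + a) + f (x + b) + f x = 0}"

definition omega :: "('a::{finite,comm_ring_1} \<Rightarrow> 'a) \<Rightarrow> nat \<Rightarrow> nat" where
  "omega f i = card {(a, b). a * b * (a + b) \<noteq> 0 \<and> nabla f a b = i}"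

end

theory Submission
  imports Defs "HOL-Computational_Algebra.Polynomial" "HOL-Number_Theory.Residues"
begin

text \<open>
  In characteristic 2, inv_swap01 x = x^-1 + [x \<in> {0, 1}]. For ab(a + b) \<noteq> 0 the second
  difference F(x) = f(x + a + b) + f(x + a) + f(x + b) + f(x) is invariant under translation by
  the subgroup V = {0, a, b, a + b}, and outside V \<union> (1 + V) it is the second difference of the
  inverse, ab(a + b) / (x(x + a)(x + b)(x + a + b)) \<noteq> 0. Hence \<nabla>(a, b) is 4 times the number of
  the cosets V, 1 + V on which F vanishes, and evaluating F at 0 and 1 gives, with
  Q = a^2 + ab + b^2 and C = ab(a + b),
    \<nabla>(a, b) / 4 = [Q = 0 \<and> 1 \<in> V] + [Q = C] + [Q = 1].
  The first event describes the ordered pairs of distinct cube roots of unity, the conjunction of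
  the other two the ordered pairs of distinct roots of x^3 + x + 1, and each of the other two is
  in bijection, via (a, b) \<mapsto> b / a, with the t \<notin> {0, 1} that are not roots of x^2 + x + 1.
  Finally x^2 + x + 1 and x^3 + x + 1 divide X^4 - X and X^8 - X, so in a field with 2^n elements
  they split when 2 dvd n, resp. 3 dvd n, and otherwise have no root at all, since
  x^(2^k) = x = x^(2^n) forces x^(2^gcd(k, n)) = x.
\<close>

section \<open>Arithmetic in characteristic 2\<close>

lemma two_eq_zero_CHAR_2: "CHAR('a::comm_ring_1) = 2 \<Longrightarrow> (2::'a) = 0"
  by (metis of_nat_CHAR of_nat_numeral)

lemma numeral_CHAR_2:
  assumes "CHAR('a::comm_ring_1) = 2"
  shows "(numeral (Num.Bit0 k) :: 'a) = 0" "(numeral (Num.Bit1 k) :: 'a) = 1"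
proof -
  have "(numeral (Num.Bit0 k) :: 'a) = 2 * numeral k"
    by (metis mult_2 numeral_Bit0)
  then show even: "(numeral (Num.Bit0 k) :: 'a) = 0"
    using two_eq_zero_CHAR_2[OF assms] by simp
  show "(numeral (Num.Bit1 k) :: 'a) = 1"
    using even by (metis numeral_Bit0 numeral_Bit1 add_0)
qed

lemma add_self_CHAR_2:
  assumes "CHAR('a::comm_ring_1) = 2"
  shows "(x::'a) + x = 0" "x + (x + y) = y"
proof -
  show "x + x = 0"
    using two_eq_zero_CHAR_2[OF assms] by (simp flip: mult_2)
  then show "x + (x + y) = y"
    by (simp flip: add.assoc)
qed

lemma eq_iff_add_eq_0_CHAR_2:
  assumes "CHAR('a::comm_ring_1) = 2"
  shows "(x::'a) = y \<longleftrightarrow> x + y = 0"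
  using add_self_CHAR_2[OF assms] by metis

lemma add_eq_iff_CHAR_2:
  assumes "CHAR('a::comm_ring_1) = 2"
  shows "(x::'a) + y = z \<longleftrightarrow> x = y + z"
proof
  assume "x + y = z"
  then show "x = y + z"
    by (auto simp: add_ac add_self_CHAR_2[OF assms])
next
  assume "x = y + z"
  then show "x + y = z"
    by (simp add: add_ac add_self_CHAR_2[OF assms])
qed

lemmas CHAR_2_simps = numeral_CHAR_2 uminus_CHAR_2 add_self_CHAR_2

lemma CHAR_eq_2_if_card_eq_power_2:
  assumes "card (UNIV :: 'a::{field,finite} set) = 2 ^ n"
  shows "CHAR('a) = 2"
proof -
  have "prime CHAR('a)"
    by (intro prime_CHAR_semidom finite_imp_CHAR_pos) simp
  moreover have "CHAR('a) dvd 2 ^ n"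
    using CHAR_dvd_CARD[where 'a='a] assms by simp
  ultimately have "CHAR('a) dvd 2"
    by (rule prime_dvd_power)
  with \<open>prime CHAR('a)\<close> show ?thesis
    by (simp add: primes_dvd_imp_eq)
qed

lemma square_eq_square_iff_CHAR_2:
  assumes "CHAR('a::field) = 2"
  shows "(x::'a) * x = y * y \<longleftrightarrow> x = y"
proof -
  have "(x + y) * (x + y) = x * x + y * y"
    using assms by (simp add: algebra_simps CHAR_2_simps)
  then show ?thesis
    using eq_iff_add_eq_0_CHAR_2[OF assms] by (metis mult_eq_0_iff)
qed

lemma ex1_square_root_CHAR_2:
  assumes "CHAR('a::{field,finite}) = 2"
  shows "\<exists>!s::'a. s * s = y"
proof -
  have "inj (\<lambda>s::'a. s * s)"
    by (rule injI) (simp add: square_eq_square_iff_CHAR_2[OF assms])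
  then have "surj (\<lambda>s::'a. s * s)"
    by (rule finite_UNIV_inj_surj[OF finite_UNIV])
  then obtain s where "s * s = y"
    by (metis surjD)
  then show ?thesis
    using square_eq_square_iff_CHAR_2[OF assms] by auto
qed

section \<open>Roots of x^2 + x + 1 and x^3 + x + 1 in a field with 2^n elements\<close>

text \<open>The library's \<open>finite_field_power_card_eq_same\<close> needs the sort \<open>finite_field\<close>.\<close>

lemma power_card_eq_self:
  fixes x :: "'a::{field,finite}"
  shows "x ^ card (UNIV :: 'a set) = x"
proof (cases "x = 0")
  case False
  have "(\<Prod>y\<in>UNIV - {0}. x * y) = (\<Prod>y\<in>UNIV - {0}. y)"
    by (rule prod.reindex_bij_witness[of _ "\<lambda>y. y / x" "\<lambda>y. x * y"]) (use False in auto)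
  then have "x ^ card (UNIV - {0 :: 'a}) * (\<Prod>y\<in>UNIV - {0}. y) = 1 * (\<Prod>y\<in>UNIV - {0}. y)"
    by (simp add: prod.distrib)
  then have "x ^ card (UNIV - {0 :: 'a}) = 1"
    by (subst (asm) mult_cancel_right) simp
  moreover have "card (UNIV :: 'a set) = Suc (card (UNIV - {0 :: 'a}))"
    using card_Suc_Diff1[of UNIV "0 :: 'a"] by simp
  ultimately show ?thesis
    by (metis power_Suc mult_1_right)
qed (simp add: power_0_left)

lemma power_power_mult_eq_self:
  fixes x :: "'a::monoid_mult"
  assumes "x ^ (p ^ n) = x"
  shows "x ^ (p ^ (n * j)) = x"
proof (induction j)
  case (Suc j)
  have "p ^ (n * Suc j) = p ^ (n * j) * p ^ n"
    by (simp add: power_add)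
  then have "x ^ (p ^ (n * Suc j)) = (x ^ (p ^ (n * j))) ^ (p ^ n)"
    by (simp only: power_mult)
  then show ?case
    using Suc assms by simp
qed simp

lemma power_power_gcd_eq_self:
  fixes x :: "'a::monoid_mult"
  assumes "x ^ (p ^ k) = x" and "x ^ (p ^ n) = x"
  shows "x ^ (p ^ gcd k n) = x"
  using assms
proof (induction k n rule: gcd_nat_induct)
  case (step k n)
  have "p ^ k = p ^ (n * (k div n)) * p ^ (k mod n)"
    by (simp flip: power_add)
  then have "x ^ (p ^ k) = (x ^ (p ^ (n * (k div n)))) ^ (p ^ (k mod n))"
    by (simp only: power_mult)
  then have "x ^ (p ^ (k mod n)) = x"
    using step.prems power_power_mult_eq_self[of x p n] by simp
  then show ?case
    using step by (simp add: gcd_non_0_nat)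
qed simp

lemma diff_dvd_power_power_diff:
  fixes x :: "'a::comm_ring_1"
  shows "x ^ k - x dvd x ^ (k ^ m) - x"
proof (induction m)
  case (Suc m)
  have "x ^ (k ^ m) - x dvd (x ^ (k ^ m)) ^ k - x ^ k"
    by (simp add: power_diff_sumr2)
  with Suc.IH have "x ^ k - x dvd (x ^ (k ^ m)) ^ k - x ^ k"
    by (rule dvd_trans)
  then have "x ^ k - x dvd ((x ^ (k ^ m)) ^ k - x ^ k) + (x ^ k - x)"
    by (rule dvd_add) simp
  then show ?case
    by (simp add: power_mult[symmetric] mult.commute)
qed simp

lemma card_roots_of_dvd_X_power_card_minus_X:
  fixes P :: "'a::{field,finite} poly"
  assumes "P dvd [:0, 1:] ^ card (UNIV :: 'a set) - [:0, 1:]"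
  shows "card {x. poly P x = 0} = degree P"
proof -
  let ?q = "card (UNIV :: 'a set)"
  obtain G where PG: "[:0, 1:] ^ ?q - [:0, 1:] = P * G"
    using assms by blast
  have "card {0, 1 :: 'a} \<le> ?q"
    by (rule card_mono) simp_all
  then have q2: "?q \<ge> 2"
    by simp
  have "degree ([:0, 1:] ^ ?q - [:0, 1 :: 'a:]) = ?q"
    using q2 by (subst diff_conv_add_uminus, subst degree_add_eq_left) (simp_all add: degree_linear_power)
  then have "degree (P * G) = ?q" and "P * G \<noteq> 0"
    using q2 PG by auto
  then have P0: "P \<noteq> 0" and G0: "G \<noteq> 0" and deg: "degree P + degree G = ?q"
    by (auto simp: degree_mult_eq)
  have "poly P x * poly G x = 0" for x
    using arg_cong[OF PG, of "\<lambda>p. poly p x"] by (simp add: power_card_eq_self)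
  then have "UNIV = {x. poly P x = 0} \<union> {x. poly G x = 0}"
    by auto
  then have "?q \<le> card {x. poly P x = 0} + card {x. poly G x = 0}"
    by (metis card_Un_le)
  then have "degree P \<le> card {x. poly P x = 0}"
    using card_poly_roots_bound[OF G0] deg by linarith
  then show ?thesis
    using card_poly_roots_bound[OF P0] by simp
qed

lemma card_roots_of_dvd_X_power_power_minus_X:
  fixes P :: "'a::{field,finite} poly"
  assumes card: "card (UNIV :: 'a set) = p ^ n" and "prime k"
    and dvd: "P dvd [:0, 1:] ^ (p ^ k) - [:0, 1:]"
    and no_small_roots: "\<And>x. x ^ p = x \<Longrightarrow> poly P x \<noteq> 0"
  shows "card {x. poly P x = 0} = (if k dvd n then degree P else 0)"
proof (cases "k dvd n")
  case True
  then obtain m where m: "n = k * m"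
    by blast
  have "P dvd [:0, 1:] ^ (p ^ k) - [:0, 1:]"
    by (fact dvd)
  also have "\<dots> dvd [:0, 1:] ^ ((p ^ k) ^ m) - [:0, 1:]"
    by (rule diff_dvd_power_power_diff)
  also have "(p ^ k) ^ m = card (UNIV :: 'a set)"
    using card m by (simp add: power_mult)
  finally show ?thesis
    using True by (simp add: card_roots_of_dvd_X_power_card_minus_X)
next
  case False
  have "poly P x \<noteq> 0" for x
  proof
    assume root: "poly P x = 0"
    obtain G where G: "[:0, 1:] ^ (p ^ k) - [:0, 1:] = P * G"
      using dvd by blast
    have "x ^ (p ^ k) - x = poly ([:0, 1:] ^ (p ^ k) - [:0, 1:]) x"
      by simp
    also have "\<dots> = 0"
      using root by (simp add: G)
    finally have "x ^ (p ^ k) = x"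
      by simp
    moreover have "x ^ (p ^ n) = x"
      using card power_card_eq_self by metis
    moreover have "gcd k n = 1"
      using False \<open>prime k\<close> by (simp add: prime_imp_coprime)
    ultimately show False
      using power_power_gcd_eq_self[of x p k n] no_small_roots root by simp
  qed
  then show ?thesis
    using False by simp
qed

lemma idempotent_imp_0_or_1: "(x::'a::idom) ^ 2 = x \<Longrightarrow> x = 0 \<or> x = 1"
  by (simp add: power2_eq_square)

lemma card_roots_x2_plus_x_plus_1:
  assumes card: "card (UNIV :: 'a::{field,finite} set) = 2 ^ n"
  shows "card {x::'a. x * x + x + 1 = 0} = (if even n then 2 else 0)"
proof -
  have char2: "CHAR('a) = 2"
    using card by (rule CHAR_eq_2_if_card_eq_power_2)
  have "[:0, 1:] ^ (2 ^ 2) - [:0, 1:] = [:1, 1, 1 :: 'a:] * [:0, -1, 1:]"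
    by (simp add: numeral_eq_Suc)
  then have dvd: "[:1, 1, 1 :: 'a:] dvd [:0, 1:] ^ (2 ^ 2) - [:0, 1:]"
    by (rule dvdI)
  have no_roots: "poly [:1, 1, 1 :: 'a:] x \<noteq> 0" if "x ^ 2 = x" for x
    using idempotent_imp_0_or_1[OF that] char2 by (auto simp: CHAR_2_simps)
  have "card {x. poly [:1, 1, 1 :: 'a:] x = 0} = (if 2 dvd n then degree [:1, 1, 1 :: 'a:] else 0)"
    by (rule card_roots_of_dvd_X_power_power_minus_X[OF card two_is_prime_nat dvd no_roots])
  moreover have "{x. poly [:1, 1, 1 :: 'a:] x = 0} = {x. x * x + x + 1 = 0}"
    by (simp add: algebra_simps)
  ultimately show ?thesis
    by simp
qed

lemma card_roots_x3_plus_x_plus_1: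
  assumes card: "card (UNIV :: 'a::{field,finite} set) = 2 ^ n"
  shows "card {x::'a. x * x * x + x + 1 = 0} = (if 3 dvd n then 3 else 0)"
proof -
  have char2: "CHAR('a) = 2"
    using card by (rule CHAR_eq_2_if_card_eq_power_2)
  have "[:0, 1:] ^ (2 ^ 3) - [:0, 1:] = [:1, 1, 0, 1 :: 'a:] * [:0, 1, 1, 1, 0, 1:]"
    using two_eq_zero_CHAR_2[OF char2] uminus_CHAR_2[OF char2, of 1]
    by (simp add: numeral_eq_Suc)
  then have dvd: "[:1, 1, 0, 1 :: 'a:] dvd [:0, 1:] ^ (2 ^ 3) - [:0, 1:]"
    by (rule dvdI)
  have no_roots: "poly [:1, 1, 0, 1 :: 'a:] x \<noteq> 0" if "x ^ 2 = x" for x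
    using idempotent_imp_0_or_1[OF that] char2 by (auto simp: CHAR_2_simps)
  have "prime (3::nat)"
    by simp
  then have "card {x. poly [:1, 1, 0, 1 :: 'a:] x = 0} = (if 3 dvd n then degree [:1, 1, 0, 1 :: 'a:] else 0)"
    by (rule card_roots_of_dvd_X_power_power_minus_X[OF card _ dvd no_roots])
  moreover have "{x. poly [:1, 1, 0, 1 :: 'a:] x = 0} = {x. x * x * x + x + 1 = 0}"
    by (simp add: algebra_simps)
  ultimately show ?thesis
    by simp
qed

section \<open>The second differences of inv_swap01\<close>

definition second_diff :: "('a::ab_group_add \<Rightarrow> 'a) \<Rightarrow> 'a \<Rightarrow> 'a \<Rightarrow> 'a \<Rightarrow> 'a" where
  "second_diff f a b x = f (x + a + b) + f (x + a) + f (x + b) + f x"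

lemma nabla_eq_card_second_diff_zeros:
  "nabla f a b = card {x. second_diff f a b x = 0}"
  by (simp add: nabla_def second_diff_def)

lemma second_diff_add_left_CHAR_2:
  fixes f :: "'a::comm_ring_1 \<Rightarrow> 'a"
  assumes "CHAR('a) = 2"
  shows "second_diff f a b (x + a) = second_diff f a b x"
    and "second_diff f a b (x + b) = second_diff f a b x"
  by (simp_all add: second_diff_def add_ac add_self_CHAR_2[OF assms])

lemma second_diff_inverse_CHAR_2:
  fixes a b x :: "'a::field"
  assumes char2: "CHAR('a) = 2" and "x \<notin> {0, a, b, a + b}"
  shows "second_diff inverse a b x * (x * (x + a) * (x + b) * (x + a + b)) = a * b * (a + b)"
proof -
  define u v w where "u = x + a + b" and "v = x + a" and "w = x + b"
  have "x + y \<noteq> 0" if "x \<noteq> y" for y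
    using that eq_iff_add_eq_0_CHAR_2[OF char2] by blast
  then have "x \<noteq> 0" "u \<noteq> 0" "v \<noteq> 0" "w \<noteq> 0"
    using assms(2) by (auto simp only: u_def v_def w_def add.assoc insert_iff)
  then have "(inverse u + inverse v + inverse w + inverse x) * (x * v * w * u)
      = v * w * x + u * w * x + u * v * x + u * v * w"
    by (simp add: field_simps)
  also have "\<dots> = a * b * (a + b)"
    using char2 by (simp add: u_def v_def w_def algebra_simps CHAR_2_simps)
  finally show ?thesis
    by (simp only: second_diff_def u_def v_def w_def)
qed

lemma second_diff_inverse_zero_CHAR_2:
  fixes a b :: "'a::field"
  assumes char2: "CHAR('a) = 2" and nondeg: "a * b * (a + b) \<noteq> 0"
  shows "second_diff inverse a b 0 * (a * b * (a + b)) = a * a + a * b + b * b"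
proof -
  define c where "c = a + b"
  have "a \<noteq> 0" "b \<noteq> 0" "c \<noteq> 0"
    using nondeg by (auto simp: c_def)
  then have "(inverse c + inverse a + inverse b) * (a * b * c) = a * b + b * c + a * c"
    by (simp add: field_simps)
  also have "\<dots> = a * a + a * b + b * b"
    using char2 by (simp add: c_def algebra_simps CHAR_2_simps)
  finally show ?thesis
    by (simp add: second_diff_def c_def)
qed

lemma card_pair_span_CHAR_2:
  fixes a b :: "'a::field"
  assumes "CHAR('a) = 2" and "a * b * (a + b) \<noteq> 0"
  shows "card {0, a, b, a + b} = 4"
proof -
  have "a \<noteq> 0" "b \<noteq> 0" "a + b \<noteq> 0" "a \<noteq> b" "a + b \<noteq> a" "a + b \<noteq> b"
    using assms(2) by (auto simp: add_ac add_self_CHAR_2[OF assms(1)])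
  then show ?thesis
    by simp
qed

lemma add_mem_pair_span_CHAR_2:
  fixes a b :: "'a::comm_ring_1"
  assumes "CHAR('a) = 2" and "v \<in> {0, a, b, a + b}" "w \<in> {0, a, b, a + b}"
  shows "v + w \<in> {0, a, b, a + b}"
  using assms(2,3) by (auto simp: add_ac add_self_CHAR_2[OF assms(1)])

lemma card_zeros_translation_invariant_CHAR_2:
  fixes a b c :: "'a::{field,finite}" and P :: "'a \<Rightarrow> bool"
  defines "V \<equiv> {0, a, b, a + b}"
  assumes char2: "CHAR('a) = 2" and nondeg: "a * b * (a + b) \<noteq> 0"
    and invariant: "\<And>x. P (x + a) = P x" "\<And>x. P (x + b) = P x"
    and outside: "\<And>x. x \<notin> V \<Longrightarrow> x + c \<notin> V \<Longrightarrow> \<not> P x"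
  shows "card {x. P x} = (if c \<in> V then 4 * of_bool (P 0) else 4 * of_bool (P 0) + 4 * of_bool (P c))"
proof -
  note add_V = add_mem_pair_span_CHAR_2[OF char2, where a = a and b = b, folded V_def]
  have card_V: "card V = 4"
    unfolding V_def using char2 nondeg by (rule card_pair_span_CHAR_2)
  have cancel: "x + c + c = x" for x
    by (simp add: add.assoc add_self_CHAR_2[OF char2])
  have P_add_V: "P (x + v) = P x" if "v \<in> V" for x v
    using that invariant(1)[of x] invariant(2)[of x] invariant(2)[of "x + a"]
    by (auto simp: V_def add.assoc)
  have "P x = P 0" if "x \<in> V" for x
    using P_add_V[OF that, of 0] by simp
  moreover have "P x = P c" if "x + c \<in> V" for x
    using P_add_V[OF that, of c] by (simp add: add_ac add_self_CHAR_2[OF char2])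
  ultimately have zeros: "{x. P x} = {x \<in> V. P 0} \<union> {x. x + c \<in> V \<and> P c}"
    using outside by blast
  show ?thesis
  proof (cases "c \<in> V")
    case True
    then have "{x. x + c \<in> V \<and> P c} = {x \<in> V. P 0}"
      using add_V[OF _ True] cancel P_add_V[OF True, of 0] by (metis add_0)
    then show ?thesis
      using True card_V zeros by simp
  next
    case False
    have "{x. x + c \<in> V} = (\<lambda>v. v + c) ` V"
      using cancel by (auto intro: image_eqI[of _ _ "_ + c"])
    moreover have "inj_on (\<lambda>v. v + c) V"
      by (rule inj_onI) simp
    ultimately have card_shift: "card {x. x + c \<in> V} = 4"
      using card_V by (simp add: card_image)
    have "x + c \<notin> V" if "x \<in> V" for x
      using False add_V[OF that] add_self_CHAR_2(2)[OF char2, of x c] by metis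
    then have "card {x. P x} = card {x \<in> V. P 0} + card {x. x + c \<in> V \<and> P c}"
      unfolding zeros by (intro card_Un_disjoint) auto
    then show ?thesis
      using False card_V card_shift by simp
  qed
qed

lemma second_diff_add:
  "second_diff (\<lambda>y. f y + g y) a b x = second_diff f a b x + second_diff g a b x"
  by (simp add: second_diff_def add_ac)

lemma inv_swap01_eq_CHAR_2:
  assumes "CHAR('a::field) = 2"
  shows "inv_swap01 = (\<lambda>y::'a. inverse y + of_bool (y = 0 \<or> y = 1))"
  by (auto simp: inv_swap01_def add_self_CHAR_2[OF assms])

lemma second_diff_inv_swap01_CHAR_2:
  fixes a b x :: "'a::field"
  defines "\<delta> \<equiv> \<lambda>y::'a. of_bool (y = 0 \<or> y = 1) :: 'a"
  assumes char2: "CHAR('a) = 2"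
  shows "second_diff inv_swap01 a b x = second_diff inverse a b x + second_diff \<delta> a b x"
  unfolding inv_swap01_eq_CHAR_2[OF char2] \<delta>_def by (rule second_diff_add)

lemma second_diff_indicator01_CHAR_2:
  fixes a b x :: "'a::field"
  defines "\<delta> \<equiv> \<lambda>y::'a. of_bool (y = 0 \<or> y = 1) :: 'a"
  assumes char2: "CHAR('a) = 2" and nondeg: "a * b * (a + b) \<noteq> 0"
  shows "x \<notin> {0, a, b, a + b} \<Longrightarrow> x + 1 \<notin> {0, a, b, a + b} \<Longrightarrow> second_diff \<delta> a b x = 0"
    and "second_diff \<delta> a b 0 = of_bool (1 \<notin> {a, b, a + b})"
    and "1 \<notin> {a, b, a + b} \<Longrightarrow> second_diff \<delta> a b 1 = 1"
proof -
  note add_eq = add_eq_iff_CHAR_2[OF char2]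
  have "a \<noteq> 0" "b \<noteq> 0" "a + b \<noteq> 0" "a \<noteq> b"
    using nondeg by (auto simp: add_self_CHAR_2[OF char2])
  show "second_diff \<delta> a b x = 0" if "x \<notin> {0, a, b, a + b}" "x + 1 \<notin> {0, a, b, a + b}"
  proof -
    have "x + v \<noteq> 0 \<and> x + v \<noteq> 1" if "v \<in> {0, a, b, a + b}" for v
      using \<open>x \<notin> _\<close> \<open>x + 1 \<notin> _\<close> that add_eq[of x v] add_eq[of x 1 v] by (auto simp: add.commute)
    from this[of 0] this[of a] this[of b] this[of "a + b"] show ?thesis
      by (simp add: \<delta>_def second_diff_def add.assoc)
  qed
  show "second_diff \<delta> a b 0 = of_bool (1 \<notin> {a, b, a + b})"
    using \<open>a \<noteq> 0\<close> \<open>b \<noteq> 0\<close> \<open>a + b \<noteq> 0\<close> \<open>a \<noteq> b\<close>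
    by (auto simp: \<delta>_def second_diff_def add_eq add_self_CHAR_2[OF char2])
  show "second_diff \<delta> a b 1 = 1" if "1 \<notin> {a, b, a + b}"
    using that \<open>a \<noteq> 0\<close> \<open>b \<noteq> 0\<close> \<open>a + b \<noteq> 0\<close>
    by (simp add: \<delta>_def second_diff_def add_eq add_ac)
qed

lemma prod_one_add_CHAR_2:
  fixes a b :: "'a::comm_ring_1"
  assumes "CHAR('a) = 2"
  shows "(1 + a) * (1 + b) * (1 + a + b) = 1 + (a * a + a * b + b * b) + a * b * (a + b)"
  using assms by (simp add: algebra_simps CHAR_2_simps)

lemma quadratic_form_eq_one_add_cubic_form_CHAR_2:
  fixes a b :: "'a::comm_ring_1"
  assumes char2: "CHAR('a) = 2" and "1 \<in> {a, b, a + b}"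
  shows "a * a + a * b + b * b = 1 + a * b * (a + b)"
proof -
  consider "a = 1" | "b = 1" | "a + b = 1"
    using assms(2) by force
  then show ?thesis
  proof cases
    case 3
    have "b = a + (a + b)"
      by (simp only: add_self_CHAR_2[OF char2])
    then have "b = a + 1"
      by (simp only: 3)
    then show ?thesis
      using char2 by (simp add: algebra_simps CHAR_2_simps)
  qed (use char2 in \<open>simp_all add: algebra_simps CHAR_2_simps\<close>)
qed

lemma second_diff_inv_swap01_neq_0_CHAR_2:
  fixes a b x :: "'a::field"
  assumes char2: "CHAR('a) = 2" and nondeg: "a * b * (a + b) \<noteq> 0"
    and "x \<notin> {0, a, b, a + b}" "x + 1 \<notin> {0, a, b, a + b}"
  shows "second_diff inv_swap01 a b x \<noteq> 0"
  using second_diff_inverse_CHAR_2[OF char2 assms(3)] nondeg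
    second_diff_indicator01_CHAR_2(1)[OF char2 nondeg assms(3,4)]
  by (auto simp: second_diff_inv_swap01_CHAR_2[OF char2])

lemma second_diff_inv_swap01_zero_eq_0_iff_CHAR_2:
  fixes a b :: "'a::field"
  assumes char2: "CHAR('a) = 2" and nondeg: "a * b * (a + b) \<noteq> 0"
  shows "second_diff inv_swap01 a b 0 = 0 \<longleftrightarrow>
    (if 1 \<in> {a, b, a + b} then a * a + a * b + b * b = 0 else a * a + a * b + b * b = a * b * (a + b))"
proof -
  define s where "s = second_diff inverse a b 0"
  have "s * (a * b * (a + b)) = a * a + a * b + b * b"
    unfolding s_def by (rule second_diff_inverse_zero_CHAR_2[OF char2 nondeg])
  then have "s = 0 \<longleftrightarrow> a * a + a * b + b * b = 0" "s = 1 \<longleftrightarrow> a * a + a * b + b * b = a * b * (a + b)"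
    using nondeg by (auto simp: mult_cancel_right2)
  moreover have "s + 1 = 0 \<longleftrightarrow> s = 1"
    using eq_iff_add_eq_0_CHAR_2[OF char2, of s 1] by simp
  ultimately show ?thesis
    by (simp add: second_diff_inv_swap01_CHAR_2[OF char2] second_diff_indicator01_CHAR_2(2)[OF char2 nondeg]
        flip: s_def)
qed

lemma second_diff_inv_swap01_one_eq_0_iff_CHAR_2:
  fixes a b :: "'a::field"
  assumes char2: "CHAR('a) = 2" and nondeg: "a * b * (a + b) \<noteq> 0" and "1 \<notin> {a, b, a + b}"
  shows "second_diff inv_swap01 a b 1 = 0 \<longleftrightarrow> a * a + a * b + b * b = 1"
proof -
  define t Q C where "t = second_diff inverse a b 1"
    and "Q = a * a + a * b + b * b" and "C = a * b * (a + b)"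
  have "t * (1 + Q + C) = C"
    using second_diff_inverse_CHAR_2[OF char2, of 1 a b] assms(3) prod_one_add_CHAR_2[OF char2, of a b]
    by (simp add: t_def Q_def C_def add.commute)
  then have "t = 1 \<longleftrightarrow> 1 + Q + C = C"
    using nondeg by (auto simp: C_def mult_cancel_right2)
  also have "\<dots> \<longleftrightarrow> Q = 1"
    using eq_iff_add_eq_0_CHAR_2[OF char2, of Q 1] by (simp add: add.commute)
  moreover have "t + 1 = 0 \<longleftrightarrow> t = 1"
    using eq_iff_add_eq_0_CHAR_2[OF char2, of t 1] by simp
  ultimately show ?thesis
    by (simp add: second_diff_inv_swap01_CHAR_2[OF char2] second_diff_indicator01_CHAR_2(3)[OF char2 nondeg assms(3)]
        Q_def flip: t_def)
qed

lemma nabla_inv_swap01_CHAR_2: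
  fixes a b :: "'a::{field,finite}"
  assumes char2: "CHAR('a) = 2" and nondeg: "a * b * (a + b) \<noteq> 0"
  shows "nabla inv_swap01 a b =
    4 * (of_bool (a * a + a * b + b * b = 0 \<and> 1 \<in> {a, b, a + b})
       + of_bool (a * a + a * b + b * b = a * b * (a + b))
       + of_bool (a * a + a * b + b * b = 1))"
proof -
  have "card {x. second_diff inv_swap01 a b x = 0} =
      (if 1 \<in> {0, a, b, a + b} then 4 * of_bool (second_diff inv_swap01 a b 0 = 0)
       else 4 * of_bool (second_diff inv_swap01 a b 0 = 0) + 4 * of_bool (second_diff inv_swap01 a b 1 = 0))"
    using second_diff_inv_swap01_neq_0_CHAR_2[OF char2 nondeg]
    by (intro card_zeros_translation_invariant_CHAR_2[OF char2 nondeg])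
      (simp_all add: second_diff_add_left_CHAR_2[OF char2])
  moreover have "a * a + a * b + b * b \<noteq> a * b * (a + b)" "a * a + a * b + b * b \<noteq> 1"
    if "1 \<in> {a, b, a + b}"
    using quadratic_form_eq_one_add_cubic_form_CHAR_2[OF char2 that] nondeg by auto
  ultimately show ?thesis
    using second_diff_inv_swap01_zero_eq_0_iff_CHAR_2[OF char2 nondeg]
      second_diff_inv_swap01_one_eq_0_iff_CHAR_2[OF char2 nondeg]
    by (auto simp: nabla_eq_card_second_diff_zeros)
qed

section \<open>Counting pairs\<close>

lemma card_Times_diff_Id:
  assumes "finite S"
  shows "int (card (S \<times> S - Id)) = int (card S) * (int (card S) - 1)"
proof -
  have "S \<times> S \<inter> Id = (\<lambda>x. (x, x)) ` S"
    by auto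
  moreover have "card ((\<lambda>x. (x, x)) ` S) = card S"
    by (rule card_image) (auto intro: inj_onI)
  ultimately have "card (S \<times> S - Id) = card S * card S - card S"
    using assms by (simp add: card_Diff_subset_Int card_cartesian_product)
  moreover have "card S \<le> card S * card S"
    by (cases "card S") simp_all
  ultimately show ?thesis
    by (simp add: of_nat_diff algebra_simps)
qed

lemma card_eq_card_by_ratio:
  fixes E :: "('a::field \<times> 'a) set" and T :: "'a set"
  assumes ratio: "\<And>a b. (a, b) \<in> E \<Longrightarrow> a \<noteq> 0 \<and> b / a \<in> T"
    and unique: "\<And>t. t \<in> T \<Longrightarrow> \<exists>!a. (a, t * a) \<in> E"
  shows "card E = card T"
proof (rule bij_betw_same_card[of "\<lambda>(a, b). b / a"], rule bij_betw_imageI)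
  show "inj_on (\<lambda>(a, b). b / a) E"
  proof (rule inj_onI, clarify)
    fix a b a' b'
    assume ab: "(a, b) \<in> E" and ab': "(a', b') \<in> E" and eq: "b / a = b' / a'"
    define t where "t = b / a"
    have b: "b = t * a"
      using ratio[OF ab] by (simp add: t_def)
    have b': "b' = t * a'"
      using ratio[OF ab'] by (simp add: t_def eq)
    have "(a, t * a) \<in> E" "(a', t * a') \<in> E"
      using ab ab' by (simp_all only: b b')
    moreover have "t \<in> T"
      using ratio[OF ab] by (simp add: t_def)
    then have "\<exists>!a. (a, t * a) \<in> E"
      by (rule unique)
    ultimately have "a = a'"
      by blast
    then show "a = a' \<and> b = b'"
      using b b' by simp
  qed
  show "(\<lambda>(a, b). b / a) ` E = T"
  proof
    show "(\<lambda>(a, b). b / a) ` E \<subseteq> T"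
      using ratio by auto
    show "T \<subseteq> (\<lambda>(a, b). b / a) ` E"
    proof
      fix t
      assume "t \<in> T"
      then obtain a where a: "(a, t * a) \<in> E"
        using unique by blast
      then have "t = (\<lambda>(a, b). b / a) (a, t * a)"
        using ratio[OF a] by simp
      then show "t \<in> (\<lambda>(a, b). b / a) ` E"
        using a by blast
    qed
  qed
qed

lemma quadratic_and_cubic_form_scaled:
  fixes a t :: "'a::comm_ring_1"
  shows "a * a + a * (t * a) + (t * a) * (t * a) = a * a * (t * t + t + 1)"
    and "a * (t * a) * (a + t * a) = a * a * a * (t * t + t)"
  by (simp_all add: algebra_simps)

lemma ratio_mem_nonroots_CHAR_2:
  fixes a b :: "'a::field"
  assumes char2: "CHAR('a) = 2" and nondeg: "a * b * (a + b) \<noteq> 0"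
    and "a * a + a * b + b * b \<noteq> 0"
  shows "a \<noteq> 0 \<and> b / a \<in> {t. t \<noteq> 0 \<and> t \<noteq> 1 \<and> t * t + t + 1 \<noteq> 0}"
proof -
  have "a \<noteq> 0" "b \<noteq> 0" "a \<noteq> b"
    using nondeg by (auto simp: add_self_CHAR_2[OF char2])
  moreover have "b = (b / a) * a"
    using \<open>a \<noteq> 0\<close> by simp
  then have "a * a * ((b / a) * (b / a) + b / a + 1) \<noteq> 0"
    using assms(3) quadratic_and_cubic_form_scaled(1)[of a "b / a"] by metis
  ultimately show ?thesis
    by simp
qed

lemma square_add_self_neq_0_CHAR_2:
  fixes t :: "'a::field"
  assumes char2: "CHAR('a) = 2" and "t \<noteq> 0" "t \<noteq> 1"
  shows "t * t + t \<noteq> 0"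
proof -
  have "t + 1 \<noteq> 0"
    using assms eq_iff_add_eq_0_CHAR_2[OF char2, of t 1] by simp
  moreover have "t * t + t = t * (t + 1)"
    by (simp add: distrib_left)
  ultimately show ?thesis
    using \<open>t \<noteq> 0\<close> by simp
qed

lemma card_quadratic_form_eq_one_CHAR_2:
  assumes char2: "CHAR('a::{field,finite}) = 2"
  shows "card {(a, b::'a). a * b * (a + b) \<noteq> 0 \<and> a * a + a * b + b * b = 1}
    = card {t::'a. t \<noteq> 0 \<and> t \<noteq> 1 \<and> t * t + t + 1 \<noteq> 0}"
proof (rule card_eq_card_by_ratio)
  show "a \<noteq> 0 \<and> b / a \<in> {t. t \<noteq> 0 \<and> t \<noteq> 1 \<and> t * t + t + 1 \<noteq> 0}"
    if "(a, b) \<in> {(a, b). a * b * (a + b) \<noteq> 0 \<and> a * a + a * b + b * b = 1}" for a b :: 'a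
    using that ratio_mem_nonroots_CHAR_2[OF char2, of a b] by simp
  show "\<exists>!a. (a, t * a) \<in> {(a, b). a * b * (a + b) \<noteq> 0 \<and> a * a + a * b + b * b = 1}"
    if "t \<in> {t. t \<noteq> 0 \<and> t \<noteq> 1 \<and> t * t + t + 1 \<noteq> 0}" for t :: 'a
  proof -
    have t: "t * t + t \<noteq> 0" "t * t + t + 1 \<noteq> 0"
      using that square_add_self_neq_0_CHAR_2[OF char2, of t] by auto
    have "(a, t * a) \<in> {(a, b). a * b * (a + b) \<noteq> 0 \<and> a * a + a * b + b * b = 1}
        \<longleftrightarrow> a * a * a * (t * t + t) \<noteq> 0 \<and> a * a * (t * t + t + 1) = 1" for a
      unfolding mem_Collect_eq prod.case quadratic_and_cubic_form_scaled ..
    also have "\<dots> a \<longleftrightarrow> a * a * (t * t + t + 1) = 1" for a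
      using t by auto
    also have "\<dots> a \<longleftrightarrow> a * a = inverse (t * t + t + 1)" for a
      using t by (simp add: field_simps)
    finally have "(a, t * a) \<in> {(a, b). a * b * (a + b) \<noteq> 0 \<and> a * a + a * b + b * b = 1}
        \<longleftrightarrow> a * a = inverse (t * t + t + 1)" for a .
    then show ?thesis
      using ex1_square_root_CHAR_2[OF char2] by simp
  qed
qed

lemma card_quadratic_form_eq_cubic_form_CHAR_2:
  assumes char2: "CHAR('a::{field,finite}) = 2"
  shows "card {(a, b::'a). a * b * (a + b) \<noteq> 0 \<and> a * a + a * b + b * b = a * b * (a + b)}
    = card {t::'a. t \<noteq> 0 \<and> t \<noteq> 1 \<and> t * t + t + 1 \<noteq> 0}"
proof (rule card_eq_card_by_ratio)
  show "a \<noteq> 0 \<and> b / a \<in> {t. t \<noteq> 0 \<and> t \<noteq> 1 \<and> t * t + t + 1 \<noteq> 0}"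
    if "(a, b) \<in> {(a, b). a * b * (a + b) \<noteq> 0 \<and> a * a + a * b + b * b = a * b * (a + b)}" for a b :: 'a
    using that ratio_mem_nonroots_CHAR_2[OF char2, of a b] by simp
  show "\<exists>!a. (a, t * a) \<in> {(a, b). a * b * (a + b) \<noteq> 0 \<and> a * a + a * b + b * b = a * b * (a + b)}"
    if "t \<in> {t. t \<noteq> 0 \<and> t \<noteq> 1 \<and> t * t + t + 1 \<noteq> 0}" for t :: 'a
  proof -
    have t: "t * t + t \<noteq> 0" "t * t + t + 1 \<noteq> 0"
      using that square_add_self_neq_0_CHAR_2[OF char2, of t] by auto
    have "(a, t * a) \<in> {(a, b). a * b * (a + b) \<noteq> 0 \<and> a * a + a * b + b * b = a * b * (a + b)}
        \<longleftrightarrow> a * a * a * (t * t + t) \<noteq> 0 \<and> a * a * (t * t + t + 1) = a * a * (a * (t * t + t))" for a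
      unfolding mem_Collect_eq prod.case quadratic_and_cubic_form_scaled by (simp only: mult.assoc)
    also have "\<dots> a \<longleftrightarrow> a \<noteq> 0 \<and> t * t + t + 1 = a * (t * t + t)" for a
      using t by auto
    also have "\<dots> a \<longleftrightarrow> a = (t * t + t + 1) / (t * t + t)" for a
      using t by (auto simp: field_simps)
    finally have "(a, t * a) \<in> {(a, b). a * b * (a + b) \<noteq> 0 \<and> a * a + a * b + b * b = a * b * (a + b)}
        \<longleftrightarrow> a = (t * t + t + 1) / (t * t + t)" for a .
    then show ?thesis
      by simp
  qed
qed

lemma cube_root_of_unity_iff_CHAR_2:
  assumes "CHAR('a::field) = 2"
  shows "(x::'a) * x * x = 1 \<longleftrightarrow> x = 1 \<or> x * x + x + 1 = 0"
proof -
  have "x * x * x + 1 = (x + 1) * (x * x + x + 1)"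
    using assms by (simp add: algebra_simps CHAR_2_simps)
  then show ?thesis
    using eq_iff_add_eq_0_CHAR_2[OF assms, of "x * x * x" 1] eq_iff_add_eq_0_CHAR_2[OF assms, of x 1]
    by simp
qed

lemma sum_cubes_CHAR_2:
  fixes a b :: "'a::comm_ring_1"
  assumes "CHAR('a) = 2"
  shows "a * a * a + b * b * b = (a + b) * (a * a + a * b + b * b)"
  using assms by (simp add: algebra_simps CHAR_2_simps)

lemma distinct_cube_roots_of_unity_CHAR_2:
  fixes a b :: "'a::field"
  assumes char2: "CHAR('a) = 2" and a: "a * a * a = 1" and b: "b * b * b = 1" and "a \<noteq> b"
  shows "a * b * (a + b) \<noteq> 0 \<and> a * a + a * b + b * b = 0 \<and> 1 \<in> {a, b, a + b}"
proof -
  have "a + b \<noteq> 0"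
    using \<open>a \<noteq> b\<close> eq_iff_add_eq_0_CHAR_2[OF char2, of a b] by simp
  then have "a * a + a * b + b * b = 0"
    using a b sum_cubes_CHAR_2[OF char2, of a b] by (simp add: add_self_CHAR_2[OF char2])
  moreover have "a * b * (a + b) \<noteq> 0"
    using a b \<open>a + b \<noteq> 0\<close> by auto
  moreover have "a + b = 1" if "a \<noteq> 1" "b \<noteq> 1"
  proof -
    have "a * a + a + 1 = 0" "b * b + b + 1 = 0"
      using a b that cube_root_of_unity_iff_CHAR_2[OF char2] by auto
    moreover have "(a + b) * (a + b + 1) = (a * a + a + 1) + (b * b + b + 1)"
      using char2 by (simp add: algebra_simps CHAR_2_simps)
    ultimately have "(a + b) * (a + b + 1) = 0"
      by simp
    then show ?thesis
      using \<open>a + b \<noteq> 0\<close> eq_iff_add_eq_0_CHAR_2[OF char2, of "a + b" 1] by simp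
  qed
  ultimately show ?thesis
    by force
qed

lemma cube_roots_of_unity_if_CHAR_2:
  fixes a b :: "'a::field"
  assumes char2: "CHAR('a) = 2" and nondeg: "a * b * (a + b) \<noteq> 0"
    and Q: "a * a + a * b + b * b = 0" and one: "1 \<in> {a, b, a + b}"
  shows "a * a * a = 1 \<and> b * b * b = 1 \<and> a \<noteq> b"
proof -
  have "a * a * a = b * b * b"
    using sum_cubes_CHAR_2[OF char2, of a b] Q eq_iff_add_eq_0_CHAR_2[OF char2] by simp
  moreover have "a * a * a = 1 \<or> b * b * b = 1"
  proof -
    have C: "a * b * (a + b) = 1"
      using quadratic_form_eq_one_add_cubic_form_CHAR_2[OF char2 one] Q eq_iff_add_eq_0_CHAR_2[OF char2]
      by (simp add: add.commute)
    from one consider "a = 1" | "b = 1" | "a + b = 1"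
      by force
    then show ?thesis
    proof cases
      case 3
      have "b = a + 1"
        using add_self_CHAR_2(2)[OF char2, of a b] 3 by simp
      moreover have "a * b = 1"
        using C 3 by simp
      ultimately have "a * a + a + 1 = 0"
        using char2 by (simp add: algebra_simps CHAR_2_simps)
      then show ?thesis
        using cube_root_of_unity_iff_CHAR_2[OF char2, of a] by simp
    qed simp_all
  qed
  moreover have "a \<noteq> b"
    using nondeg add_self_CHAR_2[OF char2] by auto
  ultimately show ?thesis
    by auto
qed

lemma card_pairs_cube_roots_of_unity_CHAR_2:
  assumes char2: "CHAR('a::{field,finite}) = 2"
  shows "int (card {(a, b::'a). a * b * (a + b) \<noteq> 0 \<and> a * a + a * b + b * b = 0 \<and> 1 \<in> {a, b, a + b}})
    = (int (card {x::'a. x * x + x + 1 = 0}) + 1) * int (card {x::'a. x * x + x + 1 = 0})"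
proof -
  let ?U = "{x::'a. x * x * x = 1}" and ?W = "{x::'a. x * x + x + 1 = 0}"
  have "(a, b) \<in> ?U \<times> ?U - Id \<longleftrightarrow>
      a * b * (a + b) \<noteq> 0 \<and> a * a + a * b + b * b = 0 \<and> 1 \<in> {a, b, a + b}" for a b
  proof
    assume "(a, b) \<in> ?U \<times> ?U - Id"
    then show "a * b * (a + b) \<noteq> 0 \<and> a * a + a * b + b * b = 0 \<and> 1 \<in> {a, b, a + b}"
      using distinct_cube_roots_of_unity_CHAR_2[OF char2, of a b] by simp
  next
    assume "a * b * (a + b) \<noteq> 0 \<and> a * a + a * b + b * b = 0 \<and> 1 \<in> {a, b, a + b}"
    then show "(a, b) \<in> ?U \<times> ?U - Id"
      using cube_roots_of_unity_if_CHAR_2[OF char2, of a b] by simp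
  qed
  then have pairs: "{(a, b). a * b * (a + b) \<noteq> 0 \<and> a * a + a * b + b * b = 0 \<and> 1 \<in> {a, b, a + b}}
      = ?U \<times> ?U - Id"
    by blast
  have "?U = insert 1 ?W"
    using cube_root_of_unity_iff_CHAR_2[OF char2] by blast
  moreover have "1 \<notin> ?W"
    using char2 by (simp add: CHAR_2_simps)
  ultimately have "card ?U = card ?W + 1"
    by simp
  then show ?thesis
    unfolding pairs card_Times_diff_Id[OF finite] by simp
qed

lemma distinct_roots_x3_plus_x_plus_1_iff_CHAR_2:
  fixes a b :: "'a::field"
  assumes char2: "CHAR('a) = 2"
  shows "a * a * a + a + 1 = 0 \<and> b * b * b + b + 1 = 0 \<and> a \<noteq> b \<longleftrightarrow>
    a * b * (a + b) \<noteq> 0 \<and> a * a + a * b + b * b = a * b * (a + b) \<and> a * a + a * b + b * b = 1"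
proof -
  note eq_iff = eq_iff_add_eq_0_CHAR_2[OF char2]
  define Q C where "Q = a * a + a * b + b * b" and "C = a * b * (a + b)"
  have vanish: "x * x * x + Q * x + C = 0" if "x = a \<or> x = b" for x
    using that char2 by (auto simp: Q_def C_def algebra_simps CHAR_2_simps)
  have sum: "(a * a * a + a + 1) + (b * b * b + b + 1) = (a + b) * (Q + 1)"
    and C_eq: "C = a * (a * a + Q)"
    using char2 by (simp_all add: Q_def C_def algebra_simps CHAR_2_simps)
  have "a * a * a + a + 1 = 0 \<and> b * b * b + b + 1 = 0 \<and> a \<noteq> b \<longleftrightarrow> C \<noteq> 0 \<and> Q = C \<and> Q = 1"
  proof
    assume "a * a * a + a + 1 = 0 \<and> b * b * b + b + 1 = 0 \<and> a \<noteq> b"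
    then have a: "a * a * a + a + 1 = 0" and b: "b * b * b + b + 1 = 0" and "a + b \<noteq> 0"
      using eq_iff[of a b] by auto
    then have "Q + 1 = 0"
      using sum by simp
    then have Q: "Q = 1"
      using eq_iff[of Q 1] by simp
    then have "C = a * a * a + a"
      using C_eq by (simp add: algebra_simps)
    then have "C = 1"
      using a eq_iff[of "a * a * a + a" 1] by (simp add: add.assoc)
    then show "C \<noteq> 0 \<and> Q = C \<and> Q = 1"
      using Q by simp
  next
    assume "C \<noteq> 0 \<and> Q = C \<and> Q = 1"
    then have "C \<noteq> 0" "Q = 1" "C = 1"
      by auto
    then have "x * x * x + x + 1 = 0" if "x = a \<or> x = b" for x
      using vanish[OF that] by simp
    moreover have "a \<noteq> b"
      using \<open>C \<noteq> 0\<close> add_self_CHAR_2[OF char2] by (auto simp: C_def)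
    ultimately show "a * a * a + a + 1 = 0 \<and> b * b * b + b + 1 = 0 \<and> a \<noteq> b"
      by blast
  qed
  then show ?thesis
    by (simp only: Q_def C_def)
qed

lemma card_pairs_roots_x3_plus_x_plus_1_CHAR_2:
  assumes char2: "CHAR('a::{field,finite}) = 2"
  shows "int (card {(a, b::'a). a * b * (a + b) \<noteq> 0 \<and> a * a + a * b + b * b = a * b * (a + b)
      \<and> a * a + a * b + b * b = 1})
    = int (card {x::'a. x * x * x + x + 1 = 0}) * (int (card {x::'a. x * x * x + x + 1 = 0}) - 1)"
proof -
  let ?R = "{x::'a. x * x * x + x + 1 = 0}"
  have "{(a, b). a * b * (a + b) \<noteq> 0 \<and> a * a + a * b + b * b = a * b * (a + b)
      \<and> a * a + a * b + b * b = 1} = ?R \<times> ?R - Id"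
    using distinct_roots_x3_plus_x_plus_1_iff_CHAR_2[OF char2] by auto
  then show ?thesis
    by (simp add: card_Times_diff_Id)
qed

lemma card_nondegenerate_pairs_CHAR_2:
  assumes char2: "CHAR('a::{field,finite}) = 2"
  shows "int (card {(a, b::'a). a * b * (a + b) \<noteq> 0})
    = (int (card (UNIV :: 'a set)) - 1) * (int (card (UNIV :: 'a set)) - 2)"
proof -
  have "{(a, b::'a). a * b * (a + b) \<noteq> 0} = (UNIV - {0}) \<times> (UNIV - {0}) - Id"
    using eq_iff_add_eq_0_CHAR_2[OF char2] by auto
  moreover have "int (card (UNIV - {0 :: 'a})) = int (card (UNIV :: 'a set)) - 1"
    using finite_UNIV_card_ge_0[where 'a = 'a] by (simp add: card_Diff_singleton of_nat_diff)
  ultimately show ?thesis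
    by (simp add: card_Times_diff_Id)
qed

lemma card_nonroots_add_card_roots_CHAR_2:
  assumes char2: "CHAR('a::{field,finite}) = 2"
  shows "card {t::'a. t \<noteq> 0 \<and> t \<noteq> 1 \<and> t * t + t + 1 \<noteq> 0} + card {x::'a. x * x + x + 1 = 0} + 2
    = card (UNIV :: 'a set)"
proof -
  let ?W = "{x::'a. x * x + x + 1 = 0}"
  have "0 \<notin> ?W" "1 \<notin> ?W"
    using char2 by (simp_all add: CHAR_2_simps)
  then have "card (insert 0 (insert 1 ?W)) = card ?W + 2"
    by simp
  moreover have "{t. t \<noteq> 0 \<and> t \<noteq> 1 \<and> t * t + t + 1 \<noteq> 0} = UNIV - insert 0 (insert 1 ?W)"
    by auto
  moreover have "card (UNIV - insert 0 (insert 1 ?W)) = card (UNIV :: 'a set) - card (insert 0 (insert 1 ?W))"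
    by (rule card_Diff_subset) simp_all
  moreover have "card (insert 0 (insert 1 ?W)) \<le> card (UNIV :: 'a set)"
    by (rule card_mono) simp_all
  ultimately show ?thesis
    by simp
qed

lemma card_level_sets_indicator_sum:
  fixes A B C D :: "'b set" and N :: "'b \<Rightarrow> nat"
  assumes "finite D" and "A \<subseteq> D" "B \<subseteq> D" "C \<subseteq> D" and "A \<inter> B = {}" "A \<inter> C = {}"
    and N: "\<And>p. N p = of_bool (p \<in> A) + of_bool (p \<in> B) + of_bool (p \<in> C)"
  shows "card {p \<in> D. N p = 2} = card (B \<inter> C)"
    and "card {p \<in> D. N p = 1} + 2 * card (B \<inter> C) = card A + card B + card C"
proof -
  have fin: "finite A" "finite B" "finite C"
    using assms finite_subset by blast+
  have "{p \<in> D. N p = 2} = B \<inter> C"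
    using assms by (auto simp: N)
  then show "card {p \<in> D. N p = 2} = card (B \<inter> C)"
    by simp
  have "{p \<in> D. N p = 1} = A \<union> ((B - C) \<union> (C - B))"
    using assms by (auto simp: N)
  moreover have "card (A \<union> ((B - C) \<union> (C - B))) = card A + card ((B - C) \<union> (C - B))"
    by (rule card_Un_disjoint) (use fin assms in auto)
  moreover have "card ((B - C) \<union> (C - B)) = card (B - C) + card (C - B)"
    by (rule card_Un_disjoint) (use fin in auto)
  moreover have "card (B - C) + card (B \<inter> C) = card B" "card (C - B) + card (B \<inter> C) = card C"
    using fin by (simp_all add: card_Diff_subset_Int Int_commute card_mono le_add_diff_inverse2)
  ultimately show "card {p \<in> D. N p = 1} + 2 * card (B \<inter> C) = card A + card B + card C"
    by simp
qed

lemma card_level_sets_le_2: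
  fixes N :: "'b \<Rightarrow> nat"
  assumes "finite D" and "\<And>p. p \<in> D \<Longrightarrow> N p \<le> 2"
  shows "card {p \<in> D. N p = 0} + card {p \<in> D. N p = 1} + card {p \<in> D. N p = 2} = card D"
proof -
  have "D = ({p \<in> D. N p = 0} \<union> {p \<in> D. N p = 1}) \<union> {p \<in> D. N p = 2}"
    using assms(2) by force
  also have "card \<dots> = card ({p \<in> D. N p = 0} \<union> {p \<in> D. N p = 1}) + card {p \<in> D. N p = 2}"
    by (rule card_Un_disjoint) (use assms(1) in auto)
  also have "card ({p \<in> D. N p = 0} \<union> {p \<in> D. N p = 1}) = card {p \<in> D. N p = 0} + card {p \<in> D. N p = 1}"
    by (rule card_Un_disjoint) (use assms(1) in auto)
  finally show ?thesis
    by simp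
qed

lemma omega_inv_swap01_CHAR_2:
  assumes char2: "CHAR('a::{field,finite}) = 2"
  defines "q \<equiv> int (card (UNIV :: 'a set))"
    and "w \<equiv> int (card {x::'a. x * x + x + 1 = 0})"
    and "r \<equiv> int (card {x::'a. x * x * x + x + 1 = 0})"
  shows "int (omega (inv_swap01 :: 'a \<Rightarrow> 'a) 8) = r * (r - 1)"
    and "int (omega (inv_swap01 :: 'a \<Rightarrow> 'a) 4) = (w + 1) * w + 2 * (q - w - 2) - 2 * r * (r - 1)"
    and "int (omega (inv_swap01 :: 'a \<Rightarrow> 'a) 0) = (q - 1) * (q - 2) - (w + 1) * w - 2 * (q - w - 2) + r * (r - 1)"
proof -
  define D :: "('a \<times> 'a) set" where "D = {(a, b). a * b * (a + b) \<noteq> 0}"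
  define E0 :: "('a \<times> 'a) set"
    where "E0 = {(a, b). a * b * (a + b) \<noteq> 0 \<and> a * a + a * b + b * b = 0 \<and> 1 \<in> {a, b, a + b}}"
  define E1 :: "('a \<times> 'a) set"
    where "E1 = {(a, b). a * b * (a + b) \<noteq> 0 \<and> a * a + a * b + b * b = a * b * (a + b)}"
  define E2 :: "('a \<times> 'a) set"
    where "E2 = {(a, b). a * b * (a + b) \<noteq> 0 \<and> a * a + a * b + b * b = 1}"
  define N :: "'a \<times> 'a \<Rightarrow> nat"
    where "N p = of_bool (p \<in> E0) + of_bool (p \<in> E1) + of_bool (p \<in> E2)" for p
  have "nabla inv_swap01 a b = 4 * N (a, b)" if "a * b * (a + b) \<noteq> 0" for a b :: 'a
    using nabla_inv_swap01_CHAR_2[OF char2 that] that by (simp add: N_def E0_def E1_def E2_def)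
  then have "{(a, b). a * b * (a + b) \<noteq> 0 \<and> nabla inv_swap01 a b = 4 * k} = {p \<in> D. N p = k}" for k
    by (auto simp: D_def)
  then have omega: "omega (inv_swap01 :: 'a \<Rightarrow> 'a) (4 * k) = card {p \<in> D. N p = k}" for k
    by (simp only: omega_def)
  have subsets: "E0 \<subseteq> D" "E1 \<subseteq> D" "E2 \<subseteq> D"
    by (auto simp: D_def E0_def E1_def E2_def)
  have disjoint: "E0 \<inter> E1 = {}" "E0 \<inter> E2 = {}"
    by (simp_all add: E0_def E1_def E2_def disjoint_iff)
  note levels = card_level_sets_indicator_sum[OF _ subsets disjoint N_def]
  have "N p \<le> 2" for p
    using disjoint by (auto simp: N_def)
  note partition = card_level_sets_le_2[of D N, OF _ this]
  have "E1 \<inter> E2 = {(a, b). a * b * (a + b) \<noteq> 0 \<and> a * a + a * b + b * b = a * b * (a + b)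
      \<and> a * a + a * b + b * b = 1}"
    by (auto simp: E1_def E2_def)
  moreover have "int (card E1) = q - w - 2" "int (card E2) = q - w - 2"
    using card_nonroots_add_card_roots_CHAR_2[OF char2] card_quadratic_form_eq_cubic_form_CHAR_2[OF char2]
      card_quadratic_form_eq_one_CHAR_2[OF char2]
    by (simp_all add: E1_def E2_def q_def w_def)
  ultimately show "int (omega (inv_swap01 :: 'a \<Rightarrow> 'a) 8) = r * (r - 1)"
    and "int (omega (inv_swap01 :: 'a \<Rightarrow> 'a) 4) = (w + 1) * w + 2 * (q - w - 2) - 2 * r * (r - 1)"
    and "int (omega (inv_swap01 :: 'a \<Rightarrow> 'a) 0) = (q - 1) * (q - 2) - (w + 1) * w - 2 * (q - w - 2) + r * (r - 1)"
    using omega[of 2] omega[of 1] omega[of 0] levels partition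
      card_nondegenerate_pairs_CHAR_2[OF char2] card_pairs_cube_roots_of_unity_CHAR_2[OF char2]
      card_pairs_roots_x3_plus_x_plus_1_CHAR_2[OF char2]
    by (simp_all add: q_def w_def r_def D_def E0_def)
qed

theorem mainTheorem2:
  fixes n :: nat
  assumes "n \<ge> 2"
    and "card (UNIV :: 'a::{field,finite} set) = 2 ^ n"
  shows "int (omega (inv_swap01 :: 'a \<Rightarrow> 'a) 8) = (if 3 dvd n then 6 else 0)
     \<and> int (omega (inv_swap01 :: 'a \<Rightarrow> 'a) 4) =
         (if 2 dvd n then (if 3 dvd n then 2 ^ (n + 1) - 14 else 2 ^ (n + 1) - 2)
          else (if 3 dvd n then 2 ^ (n + 1) - 16 else 2 ^ (n + 1) - 4))
     \<and> int (omega (inv_swap01 :: 'a \<Rightarrow> 'a) 0) =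
         (if 2 dvd n then (if 3 dvd n then 2 ^ (2 * n) - 5 * 2 ^ n + 10 else 2 ^ (2 * n) - 5 * 2 ^ n + 4)
          else (if 3 dvd n then 2 ^ (2 * n) - 5 * 2 ^ n + 12 else 2 ^ (2 * n) - 5 * 2 ^ n + 6))"
proof -
  have char2: "CHAR('a) = 2"
    using assms(2) by (rule CHAR_eq_2_if_card_eq_power_2)
  have q: "int (card (UNIV :: 'a set)) = 2 ^ n"
    using assms(2) by simp
  have powers: "(2::int) ^ (n + 1) = 2 * 2 ^ n" "(2::int) ^ (2 * n) = 2 ^ n * 2 ^ n"
    by (simp, simp only: mult_2 power_add)
  show ?thesis
    using omega_inv_swap01_CHAR_2[OF char2] q powers
      card_roots_x2_plus_x_plus_1[OF assms(2)] card_roots_x3_plus_x_plus_1[OF assms(2)]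
    by (cases "even n"; cases "3 dvd n") (simp_all add: algebra_simps)
qed

end
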